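(* For all $n\ge 0$ and $k\ge 0$: if $k\equiv 0$ or $3\pmod 4$ then $L(n,k)=e(n,k)$, and if $k\equiv 1$ or $2\pmod 4$ then $L(n,k)=o(n,k)$.
   Context: $e(n,k)$ (resp. $o(n,k)$) is the number of $k$-element subsets of $\{1,\dots,n\}$ whose sum of elements is even (resp. odd); the empty set counts as even. Losanitsch's triangle $(L(n,k))_{n,k\ge 0}$ is defined by $L(0,k)=[k=0]$, $L(1,k)=[k\le 1]$ for $k\ge0$, $L(n,k)=0$ for $k<0$, and for $n\ge 2$ and all $k$: $L(n,k)=L(n-2,k)+\binom{n-2}{k-1}+L(n-2,k-2)$, where $\binom{m}{j}=0$ for $j<0$ or $j>m$. *)

theory Defs
  imports Main
begin

definition binom_int :: "nat \<Rightarrow> int \<Rightarrow> nat" where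
  "binom_int m j = (if j < 0 then 0 else m choose (nat j))"

fun L :: "nat \<Rightarrow> int \<Rightarrow> nat" where
  "L 0 k = (if k = 0 then 1 else 0)"
| "L (Suc 0) k = (if 0 \<le> k \<and> k \<le> 1 then 1 else 0)"
| "L (Suc (Suc n)) k = (if k < 0 then 0 else L n k + binom_int n (k - 1) + L n (k - 2))"

definition e_cnt :: "nat \<Rightarrow> nat \<Rightarrow> nat" where
  "e_cnt n k = card {S. S \<subseteq> {1..n} \<and> card S = k \<and> even (\<Sum>S)}"

definition o_cnt :: "nat \<Rightarrow> nat \<Rightarrow> nat" where
  "o_cnt n k = card {S. S \<subseteq> {1..n} \<and> card S = k \<and> odd (\<Sum>S)}"

end

theory Submission
  imports Defs
begin

text \<open>Let c(n,k,b) count the k-subsets of {1..n} whose sum has parity b. Splitting off the two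
  largest elements n+2 and n+1, whose parities differ, gives
  c(n+2,k+2,b) = c(n,k+2,b) + C(n,k+1) + c(n,k,\<not>b), which is Losanitsch's recurrence
  provided the parity flips when k grows by 2. The parity selected by L(n,k) is that of
  1 + ... + k, the sum of the only k-subset of {1..k}, and this does flip, since
  (k+1) + (k+2) is odd; it is even exactly when k mod 4 is 0 or 3.\<close>

definition parity_count :: "nat \<Rightarrow> nat \<Rightarrow> bool \<Rightarrow> nat" where
  "parity_count n k b = card {S. S \<subseteq> {1..n} \<and> card S = k \<and> even (\<Sum>S) = b}"

lemma card_subsets_insert:
  fixes P :: "'a set \<Rightarrow> bool"
  assumes "finite A" "a \<notin> A"
  shows "card {S. S \<subseteq> insert a A \<and> P S}
       = card {S. S \<subseteq> A \<and> P S} + card {S. S \<subseteq> A \<and> P (insert a S)}"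
proof -
  let ?Old = "{S. S \<subseteq> A \<and> P S}" and ?New = "{S. S \<subseteq> A \<and> P (insert a S)}"
  have split: "{S. S \<subseteq> insert a A \<and> P S} = ?Old \<union> insert a ` ?New"
  proof (intro set_eqI iffI)
    fix S assume S: "S \<in> {S. S \<subseteq> insert a A \<and> P S}"
    show "S \<in> ?Old \<union> insert a ` ?New"
    proof (cases "a \<in> S")
      case True
      then have "S = insert a (S - {a})" by blast
      moreover have "S - {a} \<in> ?New"
        using S True by (auto simp: insert_absorb)
      ultimately show ?thesis by blast
    next
      case False
      then show ?thesis using S by blast
    qed
  qed auto
  have fin: "finite ?Old" "finite ?New"
    using \<open>finite A\<close> by (auto intro: finite_subset[of _ "Pow A"])
  have disj: "?Old \<inter> insert a ` ?New = {}"
    using \<open>a \<notin> A\<close> by blast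
  have inj: "inj_on (insert a) ?New"
    using \<open>a \<notin> A\<close> by (intro inj_onI) (metis Diff_insert_absorb subsetD mem_Collect_eq)
  have "card (?Old \<union> insert a ` ?New) = card ?Old + card (insert a ` ?New)"
    using fin disj by (simp add: card_Un_disjoint)
  then show ?thesis
    unfolding split using card_image[OF inj] by simp
qed

lemma parity_count_Suc:
  "parity_count (Suc n) (Suc k) b = parity_count n (Suc k) b + parity_count n k (b = even (Suc n))"
proof -
  let ?P = "\<lambda>S. card S = Suc k \<and> even (\<Sum>S) = b"
  have "{1..Suc n} = insert (Suc n) {1..n}" by auto
  then have "parity_count (Suc n) (Suc k) b = card {S. S \<subseteq> insert (Suc n) {1..n} \<and> ?P S}"
    unfolding parity_count_def by simp
  also have "\<dots> = parity_count n (Suc k) b + card {S. S \<subseteq> {1..n} \<and> ?P (insert (Suc n) S)}"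
    unfolding parity_count_def by (rule card_subsets_insert) auto
  also have "{S. S \<subseteq> {1..n} \<and> ?P (insert (Suc n) S)}
           = {S. S \<subseteq> {1..n} \<and> card S = k \<and> even (\<Sum>S) = (b = even (Suc n))}"
  proof -
    have "?P (insert (Suc n) S) \<longleftrightarrow> card S = k \<and> even (\<Sum>S) = (b = even (Suc n))"
      if "S \<subseteq> {1..n}" for S
    proof -
      have "Suc n \<notin> S" "finite S"
        using that finite_subset by auto
      then show ?thesis by auto
    qed
    then show ?thesis by (intro Collect_cong) blast
  qed
  finally show ?thesis unfolding parity_count_def .
qed

lemma parity_count_0: "parity_count n 0 b = of_bool b"
proof -
  have "card S = 0 \<longleftrightarrow> S = {}" if "S \<subseteq> {1..n}" for S :: "nat set"
    using finite_subset[OF that] by simp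
  then have "{S. S \<subseteq> {1..n} \<and> card S = 0 \<and> even (\<Sum>S) = b} = {S. S = {} \<and> b}"
    by (smt (verit) Collect_cong empty_subsetI even_zero sum.empty)
  then show ?thesis unfolding parity_count_def by (cases b) simp_all
qed

lemma parity_count_eq_0: "n < k \<Longrightarrow> parity_count n k b = 0"
proof -
  assume "n < k"
  have "card S \<noteq> k" if "S \<subseteq> {1..n}" for S :: "nat set"
    using card_mono[OF finite_atLeastAtMost that] \<open>n < k\<close> by simp
  then have "{S. S \<subseteq> {1..n} \<and> card S = k \<and> even (\<Sum>S) = b} = {}" by blast
  then show ?thesis unfolding parity_count_def by simp
qed

lemma parity_count_complement: "parity_count n k b + parity_count n k (\<not> b) = n choose k"
proof -
  let ?C = "\<lambda>c. {S. S \<subseteq> {1..n} \<and> card S = k \<and> even (\<Sum>S) = c}"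
  have fin: "finite (?C c)" for c by (rule finite_subset[of _ "Pow {1..n}"]) auto
  have "card (?C b) + card (?C (\<not> b)) = card (?C b \<union> ?C (\<not> b))"
    by (rule card_Un_disjoint[symmetric]) (use fin in auto)
  also have "?C b \<union> ?C (\<not> b) = {S. S \<subseteq> {1..n} \<and> card S = k}" by auto
  finally show ?thesis unfolding parity_count_def by (simp add: n_subsets)
qed

lemma parity_count_Suc_Suc_1: "parity_count (n + 2) 1 b = parity_count n 1 b + 1"
  using parity_count_Suc[of "Suc n" 0] parity_count_Suc[of n 0] by (simp add: parity_count_0)

lemma parity_count_Suc_Suc:
  "parity_count (n + 2) (k + 2) b
     = parity_count n (k + 2) b + (n choose (k + 1)) + parity_count n k (\<not> b)"
proof -
  have "parity_count (n + 2) (k + 2) b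
      = parity_count n (k + 2) b
        + (parity_count n (k + 1) (b = even (n + 1)) + parity_count n (k + 1) (b = even (n + 2)))
        + parity_count n k (\<not> b)"
    using parity_count_Suc[of "Suc n" "Suc k"] parity_count_Suc[of n "Suc k"]
      parity_count_Suc[of n k] by (cases "even n") simp_all
  also have "parity_count n (k + 1) (b = even (n + 1)) + parity_count n (k + 1) (b = even (n + 2))
           = n choose (k + 1)"
    using parity_count_complement[of n "k + 1" "b = even (n + 1)"] by simp
  finally show ?thesis .
qed

lemma even_sum_atLeastAtMost_add_2: "even (\<Sum>{1..k + 2}) \<longleftrightarrow> odd (\<Sum>{1..k::nat})"
proof -
  have "\<Sum>{1..Suc (Suc k)} = \<Sum>{1..k} + (2 * k + 3)"
    by (simp only: sum.cl_ivl_Suc) simp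
  then show ?thesis by (cases "even k") simp_all
qed

lemma even_sum_atLeastAtMost_iff: "even (\<Sum>{1..k::nat}) \<longleftrightarrow> k mod 4 = 0 \<or> k mod 4 = 3"
proof (induction k rule: nat_induct2)
  case (step k)
  then show ?case using even_sum_atLeastAtMost_add_2[of k] by presburger
qed simp_all

lemma L_neg: "k < 0 \<Longrightarrow> L n k = 0"
  by (induction n k rule: L.induct) auto

lemma L_eq_parity_count: "L n (int k) = parity_count n k (even (\<Sum>{1..k}))"
proof (induction n arbitrary: k rule: nat_induct2)
  case 0
  then show ?case by (cases k) (simp_all add: parity_count_0 parity_count_eq_0)
next
  case 1
  consider "k = 0" | "k = 1" | "k \<ge> 2" by linarith
  then show ?case
  proof cases
    case 2
    then show ?thesis using parity_count_Suc[of 0 0] by (simp add: parity_count_0 parity_count_eq_0)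
  qed (simp_all add: parity_count_0 parity_count_eq_0)
next
  case (step n)
  consider "k = 0" | "k = 1" | "k \<ge> 2" by linarith
  then show ?case
  proof cases
    case 1
    then show ?thesis using step[of 0] by (simp add: L_neg binom_int_def parity_count_0)
  next
    case 2
    then have "L (n + 2) (int k) = L n 1 + 1"
      by (simp add: L_neg binom_int_def numeral_2_eq_2)
    then show ?thesis using step[of 1] 2 parity_count_Suc_Suc_1 by simp
  next
    case 3
    then obtain j where k: "k = j + 2" using add.commute le_Suc_ex by metis
    have "L (n + 2) (int k) = L n (int k) + (n choose (j + 1)) + L n (int j)"
      using k by (simp add: binom_int_def numeral_2_eq_2 nat_add_distrib)
    also have "\<dots> = parity_count n k (even (\<Sum>{1..k})) + (n choose (j + 1))
                     + parity_count n j (\<not> even (\<Sum>{1..k}))"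
      using step[of k] step[of j] k even_sum_atLeastAtMost_add_2[of j] by simp
    also have "\<dots> = parity_count (n + 2) k (even (\<Sum>{1..k}))"
      using parity_count_Suc_Suc[of n j] k by simp
    finally show ?thesis .
  qed
qed

theorem mainTheorem3:
  fixes n k :: nat
  shows "(k mod 4 = 0 \<or> k mod 4 = 3 \<longrightarrow> L n (int k) = e_cnt n k)
       \<and> (k mod 4 = 1 \<or> k mod 4 = 2 \<longrightarrow> L n (int k) = o_cnt n k)"
proof -
  have "e_cnt n k = parity_count n k True" "o_cnt n k = parity_count n k False"
    unfolding e_cnt_def o_cnt_def parity_count_def by simp_all
  then show ?thesis
    using L_eq_parity_count[of n k] even_sum_atLeastAtMost_iff[of k] by auto
qed

end
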